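(* Let $f_d\in\mathbb{Z}[t]$ be an irreducible polynomial of degree $d$ with leading coefficient $A$, and define $\phi_d(x,y)=y^df_d(x/y)$. Suppose that there exists a quadratic polynomial $g\in\mathbb{Q}[t]$ such that $f_d(g(t))$ is reducible in $\mathbb{Q}[t]$. Then the equation $Az^2=\phi_d(x,y)$ has a solution $(x,y,z)\in\mathbb{Q}^3$ with $yz\ne 0$. *)

theory Defs
  imports "HOL-Computational_Algebra.Polynomial"
begin

text \<open>Homogenization of an integer polynomial f of degree d:
  phi(x,y) = y^d f(x/y) = sum_{i=0..d} a_i x^i y^(d-i), evaluated over the rationals.\<close>
definition homog :: "int poly \<Rightarrow> rat \<Rightarrow> rat \<Rightarrow> rat" where
  "homog f x y = (\<Sum>i\<le>degree f. of_int (coeff f i) * x ^ i * y ^ (degree f - i))"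

end

theory Submission
  imports Defs "Berlekamp_Zassenhaus.Factor_Bound"
begin

text \<open>Completing the square, g(t + s) = a t^2 + r, so k(t) = f(a t + r) is irreducible while
  k(t^2) is reducible. Take a prime factor h of k(t^2). If h(t) and h(-t) are coprime, their
  product is an even divisor of k(t^2), hence k(t^2) = c h(t) h(-t); comparing leading and
  constant coefficients makes (-1)^d lc(k) k(0) = (c lc(h) h(0))^2 a nonzero square. Otherwise
  h(-t) = \<plusminus>h(t): if h is even then k(t^2) = c h would be irreducible, and if h is odd then
  h(0) = 0 and so k(0) = 0, impossible for an irreducible k of degree at least 2. Since
  lc(k) k(0) = A a^d f(r), scaling gives the point (x, y) = (-r/a, -1/a).\<close>

lemma pcompose_linear_inverse:
  fixes b c :: "'a::field"
  assumes "b \<noteq> 0"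
  shows "[:c, b:] \<circ>\<^sub>p [:- c / b, 1 / b:] = [:0, 1:]"
  using assms by (simp add: pcompose_pCons)

lemma irreducible_pcompose_linear:
  fixes p :: "'a::field poly"
  assumes "irreducible p" "b \<noteq> 0"
  shows "irreducible (p \<circ>\<^sub>p [:c, b:])"
proof -
  let ?L = "[:c, b:]" and ?L' = "[:- c / b, 1 / b:]"
  have p: "p = (p \<circ>\<^sub>p ?L) \<circ>\<^sub>p ?L'"
    by (simp only: pcompose_assoc[symmetric] pcompose_linear_inverse[OF assms(2)] pcompose_idR)
  have deg: "degree (q \<circ>\<^sub>p ?L') = degree q" "degree (p \<circ>\<^sub>p ?L) = degree p" for q :: "'a poly"
    using assms(2) by (simp_all add: degree_pcompose)
  have irr: "irreducible\<^sub>d p" using assms(1) by simp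
  have "irreducible\<^sub>d (p \<circ>\<^sub>p ?L)"
  proof (rule irreducible\<^sub>dI)
    show "degree (p \<circ>\<^sub>p ?L) > 0" using deg(2) irreducible\<^sub>dD(1)[OF irr] by simp
  next
    fix q r :: "'a poly"
    assume "degree q < degree (p \<circ>\<^sub>p ?L)" "degree r < degree (p \<circ>\<^sub>p ?L)"
      and factor: "p \<circ>\<^sub>p ?L = q * r"
    moreover have "p = (q \<circ>\<^sub>p ?L') * (r \<circ>\<^sub>p ?L')"
      by (subst p) (simp add: factor pcompose_mult)
    ultimately show False using irreducible\<^sub>dD(2)[OF irr] deg by metis
  qed
  then show ?thesis by simp
qed

lemma irreducible_pcompose_linear_iff:
  fixes p :: "'a::field poly"
  assumes "b \<noteq> 0"
  shows "irreducible (p \<circ>\<^sub>p [:c, b:]) \<longleftrightarrow> irreducible p"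
proof
  assume irr: "irreducible (p \<circ>\<^sub>p [:c, b:])"
  have "irreducible (p \<circ>\<^sub>p [:c, b:] \<circ>\<^sub>p [:- c / b, 1 / b:])"
    by (rule irreducible_pcompose_linear[OF irr]) (use assms in simp)
  also have "p \<circ>\<^sub>p [:c, b:] \<circ>\<^sub>p [:- c / b, 1 / b:] = p"
    by (simp only: pcompose_assoc[symmetric] pcompose_linear_inverse[OF assms] pcompose_idR)
  finally show "irreducible p" .
qed (rule irreducible_pcompose_linear[OF _ assms])

lemma pcompose_reflect_reflect [simp]:
  fixes p :: "'a::comm_ring_1 poly"
  shows "p \<circ>\<^sub>p [:0, -1:] \<circ>\<^sub>p [:0, -1:] = p"
proof -
  have "[:0, -1:] \<circ>\<^sub>p [:0, -1:] = [:0, 1 :: 'a:]" by (simp add: pcompose_pCons)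
  then show ?thesis by (simp only: pcompose_assoc[symmetric] pcompose_idR)
qed

(* The imported AFP theories also declare constants named coeff, smult, monom and coprime,
   hence the qualified names below. *)
lemma monom_one_two: "Polynomial.monom (1 :: 'a::comm_semiring_1) 2 = [:0, 0, 1:]"
  by (simp add: numeral_2_eq_2 monom_Suc)

lemma even_poly_eq_pcompose_square:
  fixes p :: "'a::field_char_0 poly"
  assumes "p \<circ>\<^sub>p [:0, -1:] = p"
  obtains q where "p = q \<circ>\<^sub>p [:0, 0, 1:]"
proof
  have odd_coeff: "Polynomial.coeff p n = 0" if "odd n" for n
    using coeff_pcompose_linear[of p "-1" n] that by (simp add: assms)
  show "p = poly_square_subst p \<circ>\<^sub>p [:0, 0, 1:]"
  proof (rule poly_eqI)
    fix n :: nat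
    have "Polynomial.coeff (poly_square_subst p \<circ>\<^sub>p Polynomial.monom 1 2) n
      = (if even n then Polynomial.coeff p (2 * (n div 2)) else 0)"
      using coeff_pcompose_monom[of "n mod 2" 2 "poly_square_subst p" "n div 2"]
      by (simp add: poly_square_subst_coeff even_iff_mod_2_eq_zero)
    then show "Polynomial.coeff p n = Polynomial.coeff (poly_square_subst p \<circ>\<^sub>p [:0, 0, 1:]) n"
      using odd_coeff[of n] by (simp add: monom_one_two)
  qed
qed

lemma pcompose_dvd_pcompose_cancel:
  fixes p q r :: "'a::field poly"
  assumes dvd: "p \<circ>\<^sub>p r dvd q \<circ>\<^sub>p r" and r: "degree r > 0"
  shows "p dvd q"
proof (cases "p = 0")
  case True
  then show ?thesis using dvd r by (simp add: pcompose_eq_0_iff)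
next
  case False
  have "q \<circ>\<^sub>p r = (p * (q div p) + q mod p) \<circ>\<^sub>p r" by simp
  also have "\<dots> = p \<circ>\<^sub>p r * (q div p) \<circ>\<^sub>p r + (q mod p) \<circ>\<^sub>p r"
    by (simp only: pcompose_add pcompose_mult)
  finally have "p \<circ>\<^sub>p r dvd (q mod p) \<circ>\<^sub>p r"
    using dvd by (metis dvd_add_right_iff dvd_triv_left)
  moreover have "degree ((q mod p) \<circ>\<^sub>p r) < degree (p \<circ>\<^sub>p r)" if "q mod p \<noteq> 0"
    using that False r by (simp add: degree_pcompose degree_mod_less')
  ultimately have "q mod p = 0"
    using r by (meson dvd_imp_degree_le not_le pcompose_eq_0_iff)
  then show ?thesis by (simp add: mod_eq_0_iff_dvd)
qed

lemma irreducible_eq_smult_of_dvd: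
  fixes p q :: "'a::field poly"
  assumes "irreducible q" "p dvd q" "degree p > 0"
  obtains c where "c \<noteq> 0" "q = Polynomial.smult c p"
proof -
  obtain u where q: "q = p * u" using assms(2) by blast
  have "\<not> is_unit p" using assms(3) by (simp add: is_unit_iff_degree)
  then have "is_unit u" using irreducibleD[OF assms(1) q] by blast
  then have "u \<noteq> 0" "degree u = 0" by (auto simp: is_unit_iff_degree)
  then obtain c where "u = [:c:]" "c \<noteq> 0" by (metis degree_eq_zeroE pCons_eq_0_iff)
  then show ?thesis using that q by simp
qed

lemma even_factor_of_irreducible_pcompose_square:
  fixes k p :: "'a::field_char_0 poly"
  assumes "irreducible k" "p dvd k \<circ>\<^sub>p [:0, 0, 1:]" "p \<circ>\<^sub>p [:0, -1:] = p" "degree p > 0"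
  obtains c where "c \<noteq> 0" "k \<circ>\<^sub>p [:0, 0, 1:] = Polynomial.smult c p"
proof -
  obtain q where p: "p = q \<circ>\<^sub>p [:0, 0, 1:]" using even_poly_eq_pcompose_square assms(3) .
  have "q dvd k" using assms(2) unfolding p by (rule pcompose_dvd_pcompose_cancel) simp
  moreover have "degree q > 0" using assms(4) by (simp add: p degree_pcompose)
  ultimately obtain c where "c \<noteq> 0" "k = Polynomial.smult c q"
    using irreducible_eq_smult_of_dvd assms(1) by blast
  then show ?thesis using that by (simp add: p pcompose_smult)
qed

lemma prime_poly_reflect_cases:
  fixes h :: "'a::field_gcd poly"
  assumes "prime h"
  obtains "algebraic_semidom_class.coprime h (h \<circ>\<^sub>p [:0, -1:])"
    | "h \<circ>\<^sub>p [:0, -1:] = h" | "h \<circ>\<^sub>p [:0, -1:] = - h"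
proof (cases "algebraic_semidom_class.coprime h (h \<circ>\<^sub>p [:0, -1:])")
  case False
  then have "h dvd h \<circ>\<^sub>p [:0, -1:]"
    using prime_imp_coprime[OF assms, of "h \<circ>\<^sub>p [:0, -1:]"] by blast
  then obtain u where u: "h \<circ>\<^sub>p [:0, -1:] = h * u" ..
  have "h \<noteq> 0" using assms by auto
  then have "u \<noteq> 0" using u by (auto simp: pcompose_eq_0_iff)
  then have "degree u = 0"
    using arg_cong[OF u, of degree] \<open>h \<noteq> 0\<close> by (simp add: degree_pcompose degree_mult_eq)
  then obtain l where "u = [:l:]" by (elim degree_eq_zeroE)
  then have l: "h \<circ>\<^sub>p [:0, -1:] = Polynomial.smult l h" using u by simp
  have "h = h \<circ>\<^sub>p [:0, -1:] \<circ>\<^sub>p [:0, -1:]" by simp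
  also have "\<dots> = Polynomial.smult (l * l) h" by (simp add: l pcompose_smult)
  finally have "Polynomial.smult (l * l - 1) h = 0" by (simp add: smult_diff_left)
  then have "l * l = 1" using \<open>h \<noteq> 0\<close> by simp
  then have "l = 1 \<or> l = -1" by (simp add: square_eq_1_iff)
  with l show ?thesis using that(2,3) by (auto simp del: pCons_eq_iff)
qed

lemma irreducible_imp_no_root:
  fixes p :: "'a::field poly"
  assumes "irreducible p" "degree p \<noteq> 1"
  shows "poly p a \<noteq> 0"
proof
  assume "poly p a = 0"
  then obtain u where p: "p = [:- a, 1:] * u" using poly_eq_0_iff_dvd by blast
  then have "is_unit u" using irreducibleD[OF assms(1) p] by (simp add: is_unit_iff_degree)
  then have "degree p = 1"
    using p by (simp add: degree_mult_eq is_unit_iff_degree del: mult_pCons_left)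
  then show False using assms(2) by simp
qed

lemma lead_coeff_pcompose_reflect:
  fixes p :: "'a::idom poly"
  shows "lead_coeff (p \<circ>\<^sub>p [:0, -1:]) = (-1) ^ degree p * lead_coeff p"
  using lead_coeff_comp[of "[:0, -1:]" p] by (simp add: mult.commute)

lemma square_of_pcompose_square_eq_reflect_product:
  fixes k h :: "'a::idom poly"
  assumes K: "k \<circ>\<^sub>p [:0, 0, 1:] = Polynomial.smult c (h * h \<circ>\<^sub>p [:0, -1:])"
  shows "(-1) ^ degree k * lead_coeff k * poly k 0 = (c * lead_coeff h * poly h 0) ^ 2"
proof (cases "c = 0 \<or> h = 0")
  case True
  then have "k = 0" using K by (auto simp: pcompose_eq_0_iff)
  then show ?thesis using True by auto
next
  case False
  then have "2 * degree k = 2 * degree h"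
    using arg_cong[OF K, of degree] by (simp add: degree_pcompose degree_mult_eq pcompose_eq_0_iff)
  then have deg: "degree k = degree h" by simp
  have "lead_coeff k = lead_coeff (k \<circ>\<^sub>p [:0, 0, 1:])" by (subst lead_coeff_comp) simp_all
  also have "\<dots> = c * lead_coeff h * ((-1) ^ degree h * lead_coeff h)"
    by (simp only: K lead_coeff_smult lead_coeff_mult lead_coeff_pcompose_reflect mult.assoc)
  finally have lc: "lead_coeff k = c * lead_coeff h * ((-1) ^ degree h * lead_coeff h)" .
  have k0: "poly k 0 = c * poly h 0 * poly h 0"
    using arg_cong[OF K, of "\<lambda>p. poly p 0"] by (simp add: poly_pcompose)
  have "(-1) ^ degree k * lead_coeff k * poly k 0
      = (c * lead_coeff h * poly h 0) ^ 2 * ((-1) ^ degree h * (-1) ^ degree h)"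
    unfolding lc k0 unfolding deg power2_eq_square by (simp only: mult_ac)
  also have "(-1) ^ degree h * (-1) ^ degree h = (1 :: 'a)" by (simp flip: power_add)
  finally show ?thesis by simp
qed

lemma reducible_pcompose_square_imp_square:
  fixes k :: "'a::{field_char_0, field_gcd} poly"
  assumes irr: "irreducible k" and deg: "degree k \<ge> 2"
    and red: "\<not> irreducible (k \<circ>\<^sub>p [:0, 0, 1:])"
  obtains w where "w \<noteq> 0" "(-1) ^ degree k * lead_coeff k * poly k 0 = w ^ 2"
proof -
  let ?K = "k \<circ>\<^sub>p [:0, 0, 1:]" and ?R = "[:0, -1:] :: 'a poly"
  have "k \<noteq> 0" using irr by auto
  then have "?K \<noteq> 0" "\<not> is_unit ?K"
    using deg by (simp_all add: pcompose_eq_0_iff is_unit_iff_degree degree_pcompose)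
  then obtain h where "h dvd ?K" "prime h" using prime_divisor_exists by blast
  obtain u where u: "?K = h * u" using \<open>h dvd ?K\<close> ..
  have "h \<circ>\<^sub>p ?R dvd (h * u) \<circ>\<^sub>p ?R" by (simp add: pcompose_mult)
  also have "(h * u) \<circ>\<^sub>p ?R = ?K" by (simp flip: u pcompose_assoc add: pcompose_pCons)
  finally have "h \<circ>\<^sub>p ?R dvd ?K" .
  have "irreducible h" using \<open>prime h\<close> prime_elem_imp_irreducible prime_def by blast
  then have h: "irreducible h" "degree h > 0" by (auto simp: is_unit_iff_degree)
  have "poly k 0 \<noteq> 0" using deg by (intro irreducible_imp_no_root irr) simp
  from \<open>prime h\<close> show ?thesis
  proof (cases rule: prime_poly_reflect_cases)
    case 1
    then have dvd: "h * h \<circ>\<^sub>p ?R dvd ?K"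
      using \<open>h dvd ?K\<close> \<open>h \<circ>\<^sub>p ?R dvd ?K\<close> by (simp add: divides_mult)
    have "(h * h \<circ>\<^sub>p ?R) \<circ>\<^sub>p ?R = h * h \<circ>\<^sub>p ?R" by (simp add: pcompose_mult mult.commute)
    moreover have "degree (h * h \<circ>\<^sub>p ?R) > 0"
      using h by (auto simp: degree_mult_eq degree_pcompose pcompose_eq_0_iff)
    ultimately obtain c where "?K = Polynomial.smult c (h * h \<circ>\<^sub>p ?R)"
      using even_factor_of_irreducible_pcompose_square[OF irr dvd] by metis
    then have "(-1) ^ degree k * lead_coeff k * poly k 0 = (c * lead_coeff h * poly h 0) ^ 2"
      by (rule square_of_pcompose_square_eq_reflect_product)
    moreover have "(-1) ^ degree k * lead_coeff k * poly k 0 \<noteq> 0"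
      using \<open>k \<noteq> 0\<close> \<open>poly k 0 \<noteq> 0\<close> by simp
    ultimately show ?thesis using that[of "c * lead_coeff h * poly h 0"] by auto
  next
    case 2
    then obtain c where "c \<noteq> 0" "?K = Polynomial.smult c h"
      using even_factor_of_irreducible_pcompose_square[OF irr \<open>h dvd ?K\<close>] h(2) by metis
    then show ?thesis using red h(1) by simp
  next
    case 3
    have "poly h 0 = 0" using arg_cong[OF 3, of "\<lambda>p. poly p 0"] by (simp add: poly_pcompose)
    then have "poly ?K 0 = 0" unfolding u by simp
    then show ?thesis using \<open>poly k 0 \<noteq> 0\<close> by (simp add: poly_pcompose)
  qed
qed

lemma degree2_pcompose_shift_eq_pcompose_square:
  fixes g :: "'a::field_char_0 poly"
  assumes "degree g = 2"
  obtains s r a where "a \<noteq> 0" "g \<circ>\<^sub>p [:s, 1:] = [:r, a:] \<circ>\<^sub>p [:0, 0, 1:]"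
proof -
  obtain a b c where g: "g = [:c, b, a:]" "a \<noteq> 0" using degree2_coeffs assms .
  let ?s = "- b / (2 * a)" and ?r = "c - b ^ 2 / (4 * a)"
  have "poly (g \<circ>\<^sub>p [:?s, 1:]) x = poly ([:?r, a:] \<circ>\<^sub>p [:0, 0, 1:]) x" for x
    using g by (simp add: poly_pcompose field_simps power2_eq_square)
  then have "g \<circ>\<^sub>p [:?s, 1:] = [:?r, a:] \<circ>\<^sub>p [:0, 0, 1:]"
    by (intro iffD1[OF poly_eq_poly_eq_iff] ext)
  with g(2) show ?thesis by (rule that)
qed

lemma poly_eq_lead_coeff_if_degree_le_1:
  fixes p :: "'a::field poly"
  assumes "degree p \<le> 1"
  obtains x where "poly p x = lead_coeff p"
proof (cases "degree p = 0")
  case True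
  then obtain c where "p = [:c:]" by (elim degree_eq_zeroE)
  then show ?thesis using that[of 0] by simp
next
  case False
  then have "degree p = 1" using assms by simp
  then obtain a b where "p = [:b, a:]" "a \<noteq> 0" by (elim degree1_coeffs)
  then have "poly p ((a - b) / a) = lead_coeff p" by (simp add: field_simps)
  then show ?thesis by (rule that)
qed

lemma reducible_pcompose_quadratic_imp_square:
  fixes F g :: "'a::{field_char_0, field_gcd} poly"
  assumes irr: "irreducible F" and deg: "degree F \<ge> 2"
    and g: "degree g = 2" and red: "\<not> irreducible (F \<circ>\<^sub>p g)"
  obtains r a w where "a \<noteq> 0" "w \<noteq> 0"
    "(-1) ^ degree F * (lead_coeff F * a ^ degree F) * poly F r = w ^ 2"
proof -
  obtain s r a where "a \<noteq> 0" and shift: "g \<circ>\<^sub>p [:s, 1:] = [:r, a:] \<circ>\<^sub>p [:0, 0, 1:]"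
    using degree2_pcompose_shift_eq_pcompose_square g .
  let ?k = "F \<circ>\<^sub>p [:r, a:]"
  have "irreducible ?k" using irr \<open>a \<noteq> 0\<close> by (rule irreducible_pcompose_linear)
  moreover have "?k \<circ>\<^sub>p [:0, 0, 1:] = F \<circ>\<^sub>p g \<circ>\<^sub>p [:s, 1:]"
    by (simp only: pcompose_assoc[symmetric] shift)
  then have "\<not> irreducible (?k \<circ>\<^sub>p [:0, 0, 1:])"
    using red irreducible_pcompose_linear_iff[of 1 "F \<circ>\<^sub>p g" s] by simp
  moreover have "degree ?k = degree F" using \<open>a \<noteq> 0\<close> by (simp add: degree_pcompose)
  moreover have "lead_coeff ?k = lead_coeff F * a ^ degree F"
    using \<open>a \<noteq> 0\<close> by (subst lead_coeff_comp) simp_all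
  moreover have "poly ?k 0 = poly F r" by (simp add: poly_pcompose)
  ultimately obtain w
    where "w \<noteq> 0" "(-1) ^ degree F * (lead_coeff F * a ^ degree F) * poly F r = w ^ 2"
    using reducible_pcompose_square_imp_square deg by metis
  with \<open>a \<noteq> 0\<close> show ?thesis by (rule that)
qed

lemma irreducible_of_int_poly_rat:
  fixes f :: "int poly"
  assumes "irreducible f" "degree f > 0"
  shows "irreducible (of_int_poly f :: rat poly)"
proof -
  have "content f = 1" using assms nonconst_poly_irreducible_iff by blast
  then have "irreducible\<^sub>d f"
    using assms(1) irreducible_primitive_connect primitive_iff_content_eq_1 by blast
  from irreducible\<^sub>d_int_rat[OF this] show ?thesis by simp
qed

lemma homog_eq_poly:
  fixes f :: "int poly"
  assumes "y \<noteq> 0"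
  shows "homog f x y = y ^ degree f * poly (of_int_poly f) (x / y)"
proof -
  have "y ^ degree f * poly (of_int_poly f) (x / y)
      = (\<Sum>i\<le>degree f. y ^ degree f * (of_int (Polynomial.coeff f i) * (x / y) ^ i))"
    by (simp add: poly_altdef sum_distrib_left degree_map_poly)
  also have "\<dots> = (\<Sum>i\<le>degree f. of_int (Polynomial.coeff f i) * x ^ i * y ^ (degree f - i))"
  proof (rule sum.cong)
    fix i assume "i \<in> {..degree f}"
    then have "y ^ degree f = y ^ i * y ^ (degree f - i)" by (simp flip: power_add)
    then show "y ^ degree f * (of_int (Polynomial.coeff f i) * (x / y) ^ i)
      = of_int (Polynomial.coeff f i) * x ^ i * y ^ (degree f - i)"
      using assms by (simp add: power_divide)
  qed simp
  finally show ?thesis by (simp add: homog_def)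
qed

lemma homog_eq_square_of_scaled_root:
  fixes f :: "int poly" and a r w :: rat
  defines "A \<equiv> of_int (lead_coeff f) :: rat"
  assumes "f \<noteq> 0" "a \<noteq> 0"
    and w: "(-1) ^ degree f * (A * a ^ degree f) * poly (of_int_poly f) r = w ^ 2"
  shows "A * (w / (A * a ^ degree f)) ^ 2 = homog f (- r / a) (- 1 / a)"
proof -
  have "A \<noteq> 0" using assms(2) by (simp add: A_def)
  then have "A * (w / (A * a ^ degree f)) ^ 2 = w ^ 2 / (A * (a ^ degree f * a ^ degree f))"
    by (simp add: power2_eq_square)
  also have "\<dots> = (-1) ^ degree f * poly (of_int_poly f) r / a ^ degree f"
    using \<open>A \<noteq> 0\<close> \<open>a \<noteq> 0\<close> by (simp flip: w)
  also have "\<dots> = (- 1 / a) ^ degree f * poly (of_int_poly f) r"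
    by (subst power_divide) simp
  also have "\<dots> = homog f (- r / a) (- 1 / a)"
    using \<open>a \<noteq> 0\<close> by (simp add: homog_eq_poly)
  finally show ?thesis .
qed

theorem theorem6p1:
  fixes f :: "int poly"
  assumes "irreducible f"
    and "\<exists>g :: rat poly. degree g = 2 \<and>
           \<not> irreducible (pcompose (map_poly of_int f) g)"
  shows "\<exists>x y z :: rat. y * z \<noteq> 0 \<and>
           of_int (lead_coeff f) * z ^ 2 = homog f x y"
proof -
  let ?F = "of_int_poly f :: rat poly" and ?A = "of_int (lead_coeff f) :: rat"
  have "f \<noteq> 0" using assms(1) by auto
  have F: "degree ?F = degree f" "lead_coeff ?F = ?A" by (simp_all add: degree_map_poly)
  consider "degree f \<le> 1" | "degree f \<ge> 2" by linarith
  then show ?thesis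
  proof cases
    case 1
    then obtain x where "poly ?F x = ?A" using poly_eq_lead_coeff_if_degree_le_1 F by metis
    then have "?A * 1 ^ 2 = homog f x 1" by (simp add: homog_eq_poly)
    then show ?thesis by (intro exI[of _ x] exI[of _ 1]) simp
  next
    case 2
    then have "irreducible ?F" using assms(1) by (simp add: irreducible_of_int_poly_rat)
    then obtain r a w where "a \<noteq> 0" "w \<noteq> 0"
      and "(-1) ^ degree f * (?A * a ^ degree f) * poly ?F r = w ^ 2"
      using reducible_pcompose_quadratic_imp_square 2 assms(2) F by metis
    then have "?A * (w / (?A * a ^ degree f)) ^ 2 = homog f (- r / a) (- 1 / a)"
      using \<open>f \<noteq> 0\<close> by (intro homog_eq_square_of_scaled_root)
    moreover have "- 1 / a * (w / (?A * a ^ degree f)) \<noteq> 0"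
      using \<open>a \<noteq> 0\<close> \<open>w \<noteq> 0\<close> \<open>f \<noteq> 0\<close> by simp
    ultimately show ?thesis by blast
  qed
qed

end
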